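(* Let $G$ be a game state and let $P$ be a game path starting at $G$ that follows the Split-First Strategy. Let $m$ be any move that the Split-First Strategy permits at $G$. Then there exists a game path $P'$ starting at $G$ whose first move is $m$, which follows the Split-First Strategy, and which has the same length as $P$.
   Context: Fibonacci numbers are indexed by $F_1=1$, $F_2=2$, $F_{i+1}=F_i+F_{i-1}$. A game state is a finite multiset of Fibonacci numbers (tracked by index). The legal moves are: $C_1$: replace $F_1,F_1$ by $F_2$; for $i\ge 2$, $C_i$: replace $F_{i-1},F_i$ by $F_{i+1}$ (a "combining move"); $S_2$: replace $F_2,F_2$ by $F_1,F_3$; for $i\ge 3$, $S_i$: replace $F_i,F_i$ by $F_{i-2},F_{i+1}$ (a "splitting move"). Here $C_1$ is grouped with the splitting moves, and "combining move" means $C_i$ with $i\ge 2$. Every sequence of legal moves is finite. A game path from a state $G$ is a sequence of legal moves starting at $G$ and continuing until no legal move is available; its length is its number of moves. A game path follows the Split-First Strategy if at each state along it: whenever some splitting move or $C_1$ is available, the move taken is one of those (any choice); otherwise the move taken is the combining move $C_i$ ($i\ge 2$) with the smallest index $i$ among those available. *)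

theory Defs
  imports Main "HOL-Library.Multiset"
begin

(* A game state is a finite multiset of Fibonacci indices (index i stands for F_i, i >= 1). *)

datatype move = Comb nat | Split nat
(* Comb 1 = C_1;  Comb i (i >= 2) = C_i;  Split i (i >= 2) = S_i.
   Comb 0, Split 0, Split 1 are never legal. *)

fun legal :: "nat multiset \<Rightarrow> move \<Rightarrow> bool" where
  "legal G (Comb i) =
     (if i = 0 then False
      else if i = 1 then count G 1 \<ge> 2
      else (i - 1) \<in># G \<and> i \<in># G)"
| "legal G (Split i) = (i \<ge> 2 \<and> count G i \<ge> 2)"

fun step :: "nat multiset \<Rightarrow> move \<Rightarrow> nat multiset" where
  "step G (Comb i) =
     (if i = 1 then G - {#1, 1#} + {#2#}
      else G - {#i - 1, i#} + {#i + 1#})"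
| "step G (Split i) =
     (if i = 2 then G - {#2, 2#} + {#1, 3#}
      else G - {#i, i#} + {#i - 2, i + 1#})"

definition terminal :: "nat multiset \<Rightarrow> bool" where
  "terminal G \<longleftrightarrow> (\<nexists>m. legal G m)"

definition splitlike :: "move \<Rightarrow> bool" where
  "splitlike m \<longleftrightarrow> m = Comb 1 \<or> (\<exists>i. m = Split i)"

fun game_path :: "nat multiset \<Rightarrow> move list \<Rightarrow> bool" where
  "game_path G [] = terminal G"
| "game_path G (m # ms) = (legal G m \<and> game_path (step G m) ms)"

definition sf_move :: "nat multiset \<Rightarrow> move \<Rightarrow> bool" where
  "sf_move G m \<longleftrightarrow> legal G m \<and>
     (if \<exists>m'. legal G m' \<and> splitlike m' then splitlike m
      else (\<exists>i. i \<ge> 2 \<and> m = Comb i \<and> (\<forall>j. 2 \<le> j \<and> j < i \<longrightarrow> \<not> legal G (Comb j))))"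

fun follows_sf :: "nat multiset \<Rightarrow> move list \<Rightarrow> bool" where
  "follows_sf G [] = True"
| "follows_sf G (m # ms) = (sf_move G m \<and> follows_sf (step G m) ms)"

end

theory Submission
  imports Defs
begin

text \<open>If the strategy permits two different moves at a state, both are splitting moves
(or C_1): when no such move is available, the permitted combining move is the one of smallest
index and hence unique. Splitting moves at distinct indices act on disjoint pairs of equal
summands, so they commute and each stays available after the other; and since splitting moves
are always permitted, the exchanged path still follows the strategy. Induction on the path
then brings any permitted move to the front without changing the length.\<close>

lemma diff_pair_add_commute:
  fixes G A B :: "'a multiset"
  assumes "a \<noteq> b" "count G a \<ge> 2" "count G b \<ge> 2"
  shows "G - {#a, a#} + A - {#b, b#} + B = G - {#b, b#} + B - {#a, a#} + A"
  unfolding multiset_eq_iff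
proof
  fix x
  show "count (G - {#a, a#} + A - {#b, b#} + B) x = count (G - {#b, b#} + B - {#a, a#} + A) x"
    using assms by (cases "x = a"; cases "x = b"; simp)
qed

definition split_index :: "move \<Rightarrow> nat" where
  "split_index mv = (case mv of Comb k \<Rightarrow> k | Split k \<Rightarrow> k)"

definition split_result :: "move \<Rightarrow> nat multiset" where
  "split_result mv =
     (case mv of Comb k \<Rightarrow> {#2#} | Split k \<Rightarrow> if k = 2 then {#1, 3#} else {#k - 2, k + 1#})"

lemma step_splitlike:
  "splitlike mv \<Longrightarrow> step G mv = G - {#split_index mv, split_index mv#} + split_result mv"
  by (auto simp: splitlike_def split_index_def split_result_def)

lemma legal_splitlike:
  "splitlike mv \<Longrightarrow>
     legal G mv \<longleftrightarrow> (split_index mv \<ge> 2 \<or> mv = Comb 1) \<and> count G (split_index mv) \<ge> 2"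
  by (auto simp: splitlike_def split_index_def)

lemma split_index_inj:
  "\<lbrakk>splitlike m; splitlike m'; legal G m; legal G m'; m \<noteq> m'\<rbrakk>
     \<Longrightarrow> split_index m \<noteq> split_index m'"
  by (auto simp: splitlike_def split_index_def)

lemma splitlike_moves_commute:
  assumes "splitlike m" "splitlike m'" "m \<noteq> m'" "legal G m" "legal G m'"
  shows "legal (step G m') m" and "step (step G m') m = step (step G m) m'"
proof -
  have distinct: "split_index m \<noteq> split_index m'"
    using split_index_inj assms by blast
  have "count G (split_index m) \<ge> 2" "count G (split_index m') \<ge> 2"
    using assms legal_splitlike by auto
  then show "legal (step G m') m" and "step (step G m') m = step (step G m) m'"
    using assms distinct by (simp_all add: step_splitlike legal_splitlike diff_pair_add_commute)
qed

lemma sf_move_splitlike: "\<lbrakk>splitlike m; legal G m\<rbrakk> \<Longrightarrow> sf_move G m"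
  by (auto simp: sf_move_def)

lemma sf_move_combining_unique:
  assumes "sf_move G m" "sf_move G m'" "\<not> (\<exists>mv. legal G mv \<and> splitlike mv)"
  shows "m = m'"
proof -
  have "\<exists>i\<ge>2. m = Comb i \<and> (\<forall>j. 2 \<le> j \<and> j < i \<longrightarrow> \<not> legal G (Comb j))"
    using assms(1,3) unfolding sf_move_def by presburger
  then obtain i where i: "m = Comb i" "i \<ge> 2" "\<forall>j. 2 \<le> j \<and> j < i \<longrightarrow> \<not> legal G (Comb j)"
    by blast
  have "\<exists>i'\<ge>2. m' = Comb i' \<and> (\<forall>j. 2 \<le> j \<and> j < i' \<longrightarrow> \<not> legal G (Comb j))"
    using assms(2,3) unfolding sf_move_def by presburger
  then obtain i' where i': "m' = Comb i'" "i' \<ge> 2" "\<forall>j. 2 \<le> j \<and> j < i' \<longrightarrow> \<not> legal G (Comb j)"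
    by blast
  have "legal G (Comb i)" "legal G (Comb i')"
    using assms(1,2) i i' by (auto simp: sf_move_def)
  then have "i = i'"
    using i i' by (metis linorder_neqE_nat)
  then show ?thesis
    using i i' by simp
qed

lemma sf_moves_distinct_imp_splitlike:
  assumes "sf_move G m" "sf_move G m'" "m \<noteq> m'"
  shows "splitlike m \<and> splitlike m'"
proof -
  have "\<exists>mv. legal G mv \<and> splitlike mv"
    using sf_move_combining_unique assms by blast
  then show ?thesis
    using assms(1,2) unfolding sf_move_def by presburger
qed

lemma sf_move_persists:
  assumes "sf_move G m" "sf_move G m'" "m \<noteq> m'"
  shows "sf_move (step G m') m"
proof -
  have "splitlike m" "splitlike m'"
    using sf_moves_distinct_imp_splitlike assms by auto
  moreover have "legal G m" "legal G m'"
    using assms(1,2) by (simp_all add: sf_move_def)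
  ultimately show ?thesis
    using sf_move_splitlike splitlike_moves_commute(1) assms(3) by metis
qed

lemma sf_path_exchange_first:
  assumes "sf_move G m" "sf_move G m'" "m \<noteq> m'"
    and "game_path (step G m') (m # P)" "follows_sf (step G m') (m # P)"
  shows "game_path G (m # m' # P)" and "follows_sf G (m # m' # P)"
proof -
  have "sf_move (step G m) m'"
    using sf_move_persists assms(1-3) by blast
  moreover have "step (step G m) m' = step (step G m') m"
    using splitlike_moves_commute(2) sf_moves_distinct_imp_splitlike assms(1-3)
    by (metis sf_move_def)
  moreover have "legal G m" "legal (step G m) m'"
    using assms(1) \<open>sf_move (step G m) m'\<close> by (simp_all add: sf_move_def)
  ultimately show "game_path G (m # m' # P)" "follows_sf G (m # m' # P)"
    using assms(1,4,5) by simp_all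
qed

theorem lemma2p1:
  fixes G :: "nat multiset" and P :: "move list" and m :: move
  assumes "\<forall>x\<in>#G. 1 \<le> x"
    and "game_path G P" and "follows_sf G P"
    and "sf_move G m"
  shows "\<exists>P'. game_path G P' \<and> follows_sf G P' \<and> P' \<noteq> [] \<and> hd P' = m
              \<and> length P' = length P"
  using assms(2-4)
proof (induction P arbitrary: G m)
  case Nil
  then show ?case by (auto simp: terminal_def sf_move_def)
next
  case (Cons m' P)
  show ?case
  proof (cases "m' = m")
    case True
    then show ?thesis using Cons.prems by (intro exI[of _ "m' # P"]) auto
  next
    case False
    have sf: "sf_move G m'" "sf_move G m"
      using Cons.prems by simp_all
    then have "sf_move (step G m') m"
      using sf_move_persists False by blast
    then obtain P' where P': "game_path (step G m') P'" "follows_sf (step G m') P'"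
      "P' \<noteq> []" "hd P' = m" "length P' = length P"
      using Cons by auto
    then obtain Q where "P' = m # Q"
      by (cases P') auto
    then have "game_path (step G m') (m # Q)" "follows_sf (step G m') (m # Q)"
      using P' by simp_all
    note sf_path_exchange_first[OF sf(2,1) not_sym[OF False] this]
    then show ?thesis
      using \<open>P' = m # Q\<close> P'(5) by (intro exI[of _ "m # m' # Q"]) simp
  qed
qed

end
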